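(* Fix $r>0$ and $\phi,\phi_0\in[0,2\pi)$. For $z\in\mathbb C$ define $$s(z)=\frac{1}{2\pi}\Big(p_{R|R_0}(r\mid z)+\sum_{m\in\mathbb Z\setminus\{0\}}C_m(r,z)\,e^{jm(\phi-\phi_0-\gamma z^2\mathcal L)}\Big).$$ Here $p_{R|R_0}(r\mid z)=\frac{2r}{\sigma^2\mathcal L}e^{-\frac{r^2+z^2}{\sigma^2\mathcal L}}I_0\big(\frac{2rz}{\sigma^2\mathcal L}\big)$. For $m\ge1$, $C_m(r,z)=r b_m e^{-a_m(r^2+z^2)}I_m(2b_m zr)$, and $C_{-m}(r,z)=r\overline{b_m}e^{-\overline{a_m}(r^2+z^2)}I_m(2\overline{b_m}zr)$. Then the series converges uniformly on every bounded subset of $\mathbb C$, and $s$ is an entire function of $z$. For real $z=r_0\ge0$, $s(r_0)=p(r,\phi\mid r_0,\phi_0)$.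
   Context: Fix constants $\gamma>0$, $\sigma>0$, $\mathcal L>0$, and let $j=\sqrt{-1}$. For $m\in\mathbb N$ define $$a_m=\frac{\sqrt{jm\gamma}}{\sigma}\coth\!\big(\sqrt{jm\gamma\sigma^2}\,\mathcal L\big),\qquad b_m=\frac{\sqrt{jm\gamma}}{\sigma}\,\frac{1}{\sinh\!\big(\sqrt{jm\gamma\sigma^2}\,\mathcal L\big)},$$ with principal square roots. $I_m$ denotes the modified Bessel function of the first kind of order $m$, and $\overline{w}$ denotes the complex conjugate of $w$. The PZD channel conditional density (input polar coordinates $(r_0,\phi_0)$, output polar coordinates $(r,\phi)$) is $$p(r,\phi\mid r_0,\phi_0)=\frac{1}{2\pi}p_{R|R_0}(r\mid r_0)+\frac1\pi\sum_{m\ge1}\Re\!\Big(C_m(r,r_0)\,e^{jm(\phi-\phi_0-\gamma r_0^2\mathcal L)}\Big),$$ with $p_{R|R_0}$ and $C_m$ ($m\ge1$) as in the claim evaluated at real $z=r_0$. *)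

theory Defs
  imports "HOL-Analysis.Analysis"
begin

definition besselI :: "nat \<Rightarrow> 'a::{real_normed_field,banach} \<Rightarrow> 'a" where
  "besselI m w = (\<Sum>k. (w / 2) ^ (2 * k + m) / of_nat (fact k * fact (k + m)))"

definition ccoth :: "complex \<Rightarrow> complex" where
  "ccoth w = cosh w / sinh w"

definition am :: "real \<Rightarrow> real \<Rightarrow> real \<Rightarrow> nat \<Rightarrow> complex" where
  "am \<gamma> \<sigma> L m = csqrt (\<i> * of_nat m * of_real \<gamma>) / of_real \<sigma>
      * ccoth (csqrt (\<i> * of_nat m * of_real \<gamma> * of_real (\<sigma>^2)) * of_real L)"

definition bm :: "real \<Rightarrow> real \<Rightarrow> real \<Rightarrow> nat \<Rightarrow> complex" where
  "bm \<gamma> \<sigma> L m = csqrt (\<i> * of_nat m * of_real \<gamma>) / of_real \<sigma>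
      * (1 / sinh (csqrt (\<i> * of_nat m * of_real \<gamma> * of_real (\<sigma>^2)) * of_real L))"

definition pRR0 :: "real \<Rightarrow> real \<Rightarrow> real \<Rightarrow> 'a::{real_normed_field,banach} \<Rightarrow> 'a" where
  "pRR0 \<sigma> L r z = of_real (2 * r / (\<sigma>^2 * L))
      * exp (- (of_real (r^2) + z^2) / of_real (\<sigma>^2 * L))
      * besselI 0 (of_real (2 * r / (\<sigma>^2 * L)) * z)"

definition Cpos :: "real \<Rightarrow> real \<Rightarrow> real \<Rightarrow> nat \<Rightarrow> real \<Rightarrow> complex \<Rightarrow> complex" where
  "Cpos \<gamma> \<sigma> L m r z = of_real r * bm \<gamma> \<sigma> L m
      * exp (- am \<gamma> \<sigma> L m * (of_real (r^2) + z^2))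
      * besselI m (2 * bm \<gamma> \<sigma> L m * z * of_real r)"

definition Cneg :: "real \<Rightarrow> real \<Rightarrow> real \<Rightarrow> nat \<Rightarrow> real \<Rightarrow> complex \<Rightarrow> complex" where
  "Cneg \<gamma> \<sigma> L m r z = of_real r * cnj (bm \<gamma> \<sigma> L m)
      * exp (- cnj (am \<gamma> \<sigma> L m) * (of_real (r^2) + z^2))
      * besselI m (2 * cnj (bm \<gamma> \<sigma> L m) * z * of_real r)"

definition Tpos :: "real \<Rightarrow> real \<Rightarrow> real \<Rightarrow> real \<Rightarrow> real \<Rightarrow> real \<Rightarrow> nat \<Rightarrow> complex \<Rightarrow> complex" where
  "Tpos \<gamma> \<sigma> L r \<phi> \<phi>0 m z = Cpos \<gamma> \<sigma> L m r z
      * exp (\<i> * of_nat m * (of_real \<phi> - of_real \<phi>0 - of_real \<gamma> * z^2 * of_real L))"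

definition Tneg :: "real \<Rightarrow> real \<Rightarrow> real \<Rightarrow> real \<Rightarrow> real \<Rightarrow> real \<Rightarrow> nat \<Rightarrow> complex \<Rightarrow> complex" where
  "Tneg \<gamma> \<sigma> L r \<phi> \<phi>0 m z = Cneg \<gamma> \<sigma> L m r z
      * exp (\<i> * (- of_nat m) * (of_real \<phi> - of_real \<phi>0 - of_real \<gamma> * z^2 * of_real L))"

text \<open>The function s(z); the bilateral sum over m \<noteq> 0 is split into m \<ge> 1 and m \<le> -1.\<close>
definition sfun :: "real \<Rightarrow> real \<Rightarrow> real \<Rightarrow> real \<Rightarrow> real \<Rightarrow> real \<Rightarrow> complex \<Rightarrow> complex" where
  "sfun \<gamma> \<sigma> L r \<phi> \<phi>0 z = 1 / (2 * of_real pi) *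
      (pRR0 \<sigma> L r z + (\<Sum>m. Tpos \<gamma> \<sigma> L r \<phi> \<phi>0 (Suc m) z)
                     + (\<Sum>m. Tneg \<gamma> \<sigma> L r \<phi> \<phi>0 (Suc m) z))"

definition pchan :: "real \<Rightarrow> real \<Rightarrow> real \<Rightarrow> real \<Rightarrow> real \<Rightarrow> real \<Rightarrow> real \<Rightarrow> real" where
  "pchan \<gamma> \<sigma> L r \<phi> r0 \<phi>0 = 1 / (2 * pi) * pRR0 \<sigma> L r r0
      + 1 / pi * (\<Sum>m. Re (Cpos \<gamma> \<sigma> L (Suc m) r (of_real r0)
          * exp (\<i> * of_nat (Suc m) * of_real (\<phi> - \<phi>0 - \<gamma> * r0^2 * L))))"

end

theory Submission
  imports Defs "HOL-Complex_Analysis.Complex_Analysis"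
begin

text \<open>On \<open>|z| \<le> R\<close> the \<open>m\<close>-th terms of both series are bounded by \<open>C Y\<^sup>m / m!\<close>: the
  estimates of \<open>sinh\<close> and \<open>coth\<close> at arguments with real part of order \<open>\<surd>m\<close> show that \<open>b\<^sub>m\<close>
  is bounded and \<open>a\<^sub>m = O(m)\<close>, so the Gaussian and phase factors grow at most geometrically
  in \<open>m\<close>, while \<open>|I\<^sub>m(w)| \<le> (|w|/2)\<^sup>m/m! \<cdot> exp (|w|\<^sup>2/4)\<close> supplies the factorial. The Weierstrass
  M-test then gives uniform convergence on bounded sets, and uniform limits of entire
  functions are entire. On the real axis the terms of index \<open>-m\<close> are the conjugates of those
  of index \<open>m\<close>, so the two series add up to twice the real part appearing in the channel
  density.\<close>

definition dominated_on_bounded_sets :: "(nat \<Rightarrow> 'a::real_normed_vector \<Rightarrow> 'b::real_normed_vector) \<Rightarrow> bool"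
  where "dominated_on_bounded_sets f \<longleftrightarrow>
    (\<forall>R. \<exists>M. summable M \<and> (\<forall>n z. norm z \<le> R \<longrightarrow> norm (f n z) \<le> M n))"

lemma dominated_on_bounded_sets_exp:
  assumes "\<And>R n z. norm z \<le> R \<Longrightarrow> norm (f n z) \<le> C R * Y R ^ Suc n / fact (Suc n)"
  shows "dominated_on_bounded_sets f"
  unfolding dominated_on_bounded_sets_def
proof
  fix R
  have "summable (\<lambda>n. C R * Y R ^ n / fact n)"
    using summable_mult[OF summable_exp[of "Y R"], of "C R"] by (simp add: divide_inverse mult_ac)
  then have "summable (\<lambda>n. C R * Y R ^ Suc n / fact (Suc n))"
    by (simp only: summable_Suc_iff[of "\<lambda>n. C R * Y R ^ n / fact n"])
  with assms show "\<exists>M. summable M \<and> (\<forall>n z. norm z \<le> R \<longrightarrow> norm (f n z) \<le> M n)"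
    by blast
qed

lemma dominated_on_bounded_sets_summable:
  fixes f :: "nat \<Rightarrow> 'a::real_normed_vector \<Rightarrow> 'b::banach"
  assumes "dominated_on_bounded_sets f"
  shows "summable (\<lambda>n. f n z)"
proof -
  from assms obtain M where "summable M" and "\<forall>n w. norm w \<le> norm z \<longrightarrow> norm (f n w) \<le> M n"
    unfolding dominated_on_bounded_sets_def by blast
  then show ?thesis
    by (intro summable_comparison_test'[OF \<open>summable M\<close>]) simp
qed

lemma uniform_limit_suminf_bounded:
  fixes f :: "nat \<Rightarrow> 'a::real_normed_vector \<Rightarrow> 'b::banach"
  assumes "dominated_on_bounded_sets f" and "bounded B"
  shows "uniform_limit B (\<lambda>N z. \<Sum>n<N. f n z) (\<lambda>z. \<Sum>n. f n z) sequentially"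
proof -
  obtain R where R: "\<And>z. z \<in> B \<Longrightarrow> norm z \<le> R"
    using \<open>bounded B\<close> by (auto simp: bounded_iff)
  from assms(1) obtain M where "summable M" and "\<forall>n z. norm z \<le> R \<longrightarrow> norm (f n z) \<le> M n"
    unfolding dominated_on_bounded_sets_def by blast
  with R show ?thesis
    by (intro Weierstrass_m_test) auto
qed

lemma holomorphic_suminf_entire:
  fixes f :: "nat \<Rightarrow> complex \<Rightarrow> complex"
  assumes "\<And>n. f n holomorphic_on UNIV" and "dominated_on_bounded_sets f"
  shows "(\<lambda>z. \<Sum>n. f n z) holomorphic_on UNIV"
proof (rule holomorphic_uniform_sequence)
  show "(\<lambda>z. \<Sum>n<N. f n z) holomorphic_on UNIV" for N
    using assms(1) by (intro holomorphic_intros)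
  show "\<exists>d>0. cball x d \<subseteq> UNIV \<and>
      uniform_limit (cball x d) (\<lambda>N z. \<Sum>n<N. f n z) (\<lambda>z. \<Sum>n. f n z) sequentially" for x
    using uniform_limit_suminf_bounded[OF assms(2) bounded_cball] by (intro exI[of _ 1]) auto
qed simp

lemma norm_besselI_term_le:
  fixes w :: "'a::{real_normed_field,banach}"
  assumes "norm w / 2 \<le> X"
  shows "norm ((w / 2) ^ (2 * k + m) / of_nat (fact k * fact (k + m)))
     \<le> X ^ m / fact m * ((X\<^sup>2) ^ k / fact k)"
proof -
  have "0 \<le> X"
    using assms norm_ge_zero[of w] by linarith
  have "norm ((w / 2) ^ (2 * k + m) / of_nat (fact k * fact (k + m)))
      = (norm w / 2) ^ (2 * k + m) / (fact k * fact (k + m))"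
    by (simp add: norm_divide norm_power norm_mult)
  also have "\<dots> \<le> X ^ (2 * k + m) / (fact k * fact m)"
    using assms \<open>0 \<le> X\<close> by (intro frac_le power_mono mult_left_mono fact_mono) auto
  also have "\<dots> = X ^ m / fact m * ((X\<^sup>2) ^ k / fact k)"
    by (simp only: power_add power_mult times_divide_times_eq) (simp add: mult_ac)
  finally show ?thesis .
qed

lemma sums_besselI_majorant:
  "(\<lambda>k. X ^ m / fact m * ((X\<^sup>2) ^ k / fact k)) sums (X ^ m / fact m * exp (X\<^sup>2 :: real))"
  using sums_mult[OF exp_converges[of "X\<^sup>2"], of "X ^ m / fact m"] by (simp add: field_simps)

lemma summable_norm_besselI_terms:
  fixes w :: "'a::{real_normed_field,banach}"
  shows "summable (\<lambda>k. norm ((w / 2) ^ (2 * k + m) / of_nat (fact k * fact (k + m))))"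
proof (rule summable_comparison_test'[OF sums_summable[OF sums_besselI_majorant[of "norm w / 2" m]]])
  show "norm (norm ((w / 2) ^ (2 * k + m) / of_nat (fact k * fact (k + m))))
      \<le> (norm w / 2) ^ m / fact m * (((norm w / 2)\<^sup>2) ^ k / fact k)" for k
    using norm_besselI_term_le[of w "norm w / 2" k m] by simp
qed

lemma norm_besselI_le:
  fixes w :: "'a::{real_normed_field,banach}"
  assumes "norm w / 2 \<le> X"
  shows "norm (besselI m w) \<le> X ^ m / fact m * exp (X\<^sup>2)"
proof -
  have "norm (besselI m w) \<le> (\<Sum>k. norm ((w / 2) ^ (2 * k + m) / of_nat (fact k * fact (k + m))))"
    unfolding besselI_def by (rule summable_norm[OF summable_norm_besselI_terms])
  also have "\<dots> \<le> (\<Sum>k. X ^ m / fact m * ((X\<^sup>2) ^ k / fact k))"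
    using assms by (intro suminf_le summable_norm_besselI_terms sums_summable[OF sums_besselI_majorant]
        norm_besselI_term_le)
  also have "\<dots> = X ^ m / fact m * exp (X\<^sup>2)"
    by (rule sums_unique[OF sums_besselI_majorant, symmetric])
  finally show ?thesis .
qed

lemma holomorphic_besselI: "besselI m holomorphic_on UNIV"
proof -
  have "(\<lambda>w. \<Sum>k. (w / 2) ^ (2 * k + m) / of_nat (fact k * fact (k + m))) holomorphic_on UNIV"
  proof (rule holomorphic_suminf_entire)
    show "(\<lambda>w. (w / 2) ^ (2 * k + m) / of_nat (fact k * fact (k + m))) holomorphic_on UNIV" for k
      by (intro holomorphic_intros) (simp_all del: of_nat_mult)
    show "dominated_on_bounded_sets (\<lambda>k w::complex. (w / 2) ^ (2 * k + m) / of_nat (fact k * fact (k + m)))"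
      unfolding dominated_on_bounded_sets_def
    proof
      fix R
      show "\<exists>M. summable M \<and> (\<forall>k w::complex. norm w \<le> R \<longrightarrow>
          norm ((w / 2) ^ (2 * k + m) / of_nat (fact k * fact (k + m))) \<le> M k)"
        using sums_summable[OF sums_besselI_majorant[of "R / 2" m]] norm_besselI_term_le[of _ "R / 2"]
        by (intro exI[of _ "\<lambda>k. (R / 2) ^ m / fact m * (((R / 2)\<^sup>2) ^ k / fact k)"]) auto
    qed
  qed
  then show ?thesis by (simp add: besselI_def[abs_def])
qed

lemma holomorphic_on_besselI [holomorphic_intros]:
  "f holomorphic_on S \<Longrightarrow> (\<lambda>z. besselI m (f z)) holomorphic_on S"
  using holomorphic_on_compose[OF _ holomorphic_on_subset[OF holomorphic_besselI]]
  by (simp add: o_def)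

lemma besselI_of_real: "besselI m (of_real x :: complex) = of_real (besselI m x)"
proof -
  have "besselI m (of_real x :: complex)
      = (\<Sum>k. of_real ((x / 2) ^ (2 * k + m) / of_nat (fact k * fact (k + m))))"
    by (simp add: besselI_def)
  also have "\<dots> = of_real (besselI m x)"
    unfolding besselI_def
    by (rule suminf_of_real[OF summable_norm_cancel[OF summable_norm_besselI_terms], symmetric])
  finally show ?thesis .
qed

lemma besselI_cnj: "cnj (besselI m w) = besselI m (cnj w)"
proof -
  have "(\<lambda>k. cnj ((w / 2) ^ (2 * k + m) / of_nat (fact k * fact (k + m)))) sums cnj (besselI m w)"
    unfolding besselI_def sums_cnj
    by (rule summable_sums[OF summable_norm_cancel[OF summable_norm_besselI_terms]])
  then show ?thesis
    by (simp add: besselI_def sums_iff)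
qed

lemma norm_sinh_ge:
  fixes c :: complex
  assumes "Re c \<ge> 0"
  shows "(exp (Re c) - 1) / 2 \<le> norm (sinh c)"
proof -
  have "norm (sinh c) = norm (exp c - exp (- c)) / 2"
    by (simp add: sinh_def)
  moreover have "norm (exp c) - norm (exp (- c)) \<le> norm (exp c - exp (- c))"
    by (rule norm_triangle_ineq2)
  moreover have "norm (exp (- c)) \<le> 1"
    using assms by simp
  moreover have "norm (exp c) = exp (Re c)"
    by simp
  ultimately show ?thesis
    by argo
qed

lemma norm_cosh_le:
  fixes c :: complex
  assumes "Re c \<ge> 0"
  shows "norm (cosh c) \<le> (exp (Re c) + 1) / 2"
proof -
  have "norm (cosh c) = norm (exp c + exp (- c)) / 2"
    by (simp add: cosh_def)
  moreover have "norm (exp c + exp (- c)) \<le> norm (exp c) + norm (exp (- c))"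
    by (rule norm_triangle_ineq)
  moreover have "norm (exp (- c)) \<le> 1"
    using assms by simp
  moreover have "norm (exp c) = exp (Re c)"
    by simp
  ultimately show ?thesis
    by argo
qed

lemma norm_inverse_sinh_le:
  fixes c :: complex
  assumes "Re c > 0"
  shows "norm (1 / sinh c) \<le> 2 / Re c"
proof -
  have "Re c / 2 \<le> norm (sinh c)"
    using norm_sinh_ge[OF less_imp_le[OF assms]] exp_ge_add_one_self[of "Re c"] by argo
  moreover from this assms have "norm (sinh c) > 0"
    by linarith
  ultimately show ?thesis
    using assms by (simp add: norm_divide field_simps)
qed

lemma norm_ccoth_le:
  fixes c :: complex
  assumes "Re c > 0"
  shows "norm (ccoth c) \<le> 1 + 2 / Re c"
proof -
  define E where "E = exp (Re c)"
  have "Re c \<le> E - 1"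
    unfolding E_def using exp_ge_add_one_self[of "Re c"] by linarith
  have "norm (ccoth c) = norm (cosh c) / norm (sinh c)"
    by (simp add: ccoth_def norm_divide)
  also have "\<dots> \<le> ((E + 1) / 2) / ((E - 1) / 2)"
    using norm_cosh_le[of c] norm_sinh_ge[of c] assms \<open>Re c \<le> E - 1\<close>
    by (intro frac_le) (auto simp: E_def)
  also have "\<dots> = 1 + 2 / (E - 1)"
    using assms \<open>Re c \<le> E - 1\<close> by (simp add: field_simps)
  also have "\<dots> \<le> 1 + 2 / Re c"
    using assms \<open>Re c \<le> E - 1\<close> by (simp add: frac_le)
  finally show ?thesis .
qed

lemma Re_csqrt_imaginary:
  assumes "t \<ge> 0"
  shows "Re (csqrt (\<i> * of_real t)) = sqrt (t / 2)"
  using assms by (simp add: norm_mult)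

lemma norm_am_bm_prefactor:
  assumes "\<gamma> \<ge> 0" and "\<sigma> > 0"
  shows "norm (csqrt (\<i> * of_nat n * of_real \<gamma>) / of_real \<sigma>) = sqrt (n * \<gamma>) / \<sigma>"
  using assms by (simp add: norm_mult norm_divide real_sqrt_mult)

lemma Re_am_bm_argument:
  assumes "\<gamma> \<ge> 0" and "\<sigma> > 0"
  shows "Re (csqrt (\<i> * of_nat n * of_real \<gamma> * of_real (\<sigma>\<^sup>2)) * of_real L)
    = sqrt (n * \<gamma>) * \<sigma> * L / sqrt 2"
proof -
  have arg: "\<i> * of_nat n * of_real \<gamma> * of_real (\<sigma>\<^sup>2) = \<i> * (of_real (n * \<gamma> * \<sigma>\<^sup>2) :: complex)"
    by simp
  have "Re (csqrt (\<i> * of_real (n * \<gamma> * \<sigma>\<^sup>2))) = sqrt (n * \<gamma> * \<sigma>\<^sup>2 / 2)"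
    using assms by (intro Re_csqrt_imaginary) simp
  then show ?thesis
    unfolding arg using assms by (simp add: real_sqrt_mult real_sqrt_divide del: csqrt.simps)
qed

lemma norm_bm_le:
  assumes "\<gamma> > 0" and "\<sigma> > 0" and "L > 0" and "n \<ge> 1"
  shows "norm (bm \<gamma> \<sigma> L n) \<le> 2 * sqrt 2 / (\<sigma>\<^sup>2 * L)"
proof -
  define c where "c = csqrt (\<i> * of_nat n * of_real \<gamma> * of_real (\<sigma>\<^sup>2)) * of_real L"
  have Re_c: "Re c = sqrt (n * \<gamma>) * \<sigma> * L / sqrt 2"
    using assms by (simp only: c_def Re_am_bm_argument)
  then have "Re c > 0"
    using assms by simp
  have "norm (bm \<gamma> \<sigma> L n) = sqrt (n * \<gamma>) / \<sigma> * norm (1 / sinh c)"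
    unfolding bm_def c_def[symmetric] norm_mult
    using norm_am_bm_prefactor[of \<gamma> \<sigma> n] assms by simp
  also have "\<dots> \<le> sqrt (n * \<gamma>) / \<sigma> * (2 / Re c)"
    using norm_inverse_sinh_le[OF \<open>Re c > 0\<close>] assms by (intro mult_left_mono) auto
  also have "\<dots> = 2 * sqrt 2 / (\<sigma>\<^sup>2 * L)"
    using assms by (simp add: Re_c field_simps power2_eq_square)
  finally show ?thesis .
qed

lemma norm_am_le:
  assumes "\<gamma> > 0" and "\<sigma> > 0" and "L > 0" and "n \<ge> 1"
  shows "norm (am \<gamma> \<sigma> L n) \<le> (sqrt \<gamma> / \<sigma> + 2 * sqrt 2 / (\<sigma>\<^sup>2 * L)) * n"
proof -
  define c where "c = csqrt (\<i> * of_nat n * of_real \<gamma> * of_real (\<sigma>\<^sup>2)) * of_real L"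
  have Re_c: "Re c = sqrt (n * \<gamma>) * \<sigma> * L / sqrt 2"
    using assms by (simp only: c_def Re_am_bm_argument)
  then have "Re c > 0"
    using assms by simp
  have "norm (am \<gamma> \<sigma> L n) = sqrt (n * \<gamma>) / \<sigma> * norm (ccoth c)"
    unfolding am_def c_def[symmetric] norm_mult
    using norm_am_bm_prefactor[of \<gamma> \<sigma> n] assms by simp
  also have "\<dots> \<le> sqrt (n * \<gamma>) / \<sigma> * (1 + 2 / Re c)"
    using norm_ccoth_le[OF \<open>Re c > 0\<close>] assms by (intro mult_left_mono) auto
  also have "\<dots> = sqrt n * sqrt \<gamma> / \<sigma> + 2 * sqrt 2 / (\<sigma>\<^sup>2 * L)"
    using assms by (simp add: Re_c real_sqrt_mult field_simps power2_eq_square)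
  also have "\<dots> \<le> n * sqrt \<gamma> / \<sigma> + n * (2 * sqrt 2 / (\<sigma>\<^sup>2 * L))"
  proof -
    have "sqrt n \<le> n"
      using assms(4) by (simp add: real_sqrt_le_iff' le_square power2_eq_square)
    moreover have "2 * sqrt 2 / (\<sigma>\<^sup>2 * L) \<le> n * (2 * sqrt 2 / (\<sigma>\<^sup>2 * L))"
      using mult_right_mono[of 1 "real n" "2 * sqrt 2 / (\<sigma>\<^sup>2 * L)"] assms by simp
    ultimately show ?thesis
      using assms by (intro add_mono divide_right_mono mult_right_mono) auto
  qed
  finally show ?thesis
    by (simp add: algebra_simps)
qed

lemma norm_pzd_term_le:
  fixes a b z :: complex and r A B R t \<gamma> L \<phi> \<phi>0 :: real
  assumes a: "norm a \<le> A * n" and b: "norm b \<le> B" and z: "norm z \<le> R" and "r > 0"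
    and "\<bar>t\<bar> = n" and "\<gamma> \<ge> 0" and "L \<ge> 0"
  shows "norm (of_real r * b * exp (- a * (of_real (r\<^sup>2) + z\<^sup>2)) * besselI n (2 * b * z * of_real r)
           * exp (\<i> * of_real t * (of_real \<phi> - of_real \<phi>0 - of_real \<gamma> * z\<^sup>2 * of_real L)))
    \<le> r * B * exp ((B * R * r)\<^sup>2)
        * (B * R * r * exp (A * (r\<^sup>2 + R\<^sup>2)) * exp (\<gamma> * L * R\<^sup>2)) ^ n / fact n"
proof -
  have "B \<ge> 0" and "R \<ge> 0"
    using norm_ge_zero[of b] norm_ge_zero[of z] b z by linarith+
  have "norm (z\<^sup>2) \<le> R\<^sup>2"
    using z by (simp add: norm_power power_mono)
  have f1: "norm (of_real r * b) \<le> r * B"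
    using b \<open>r > 0\<close> by (simp add: norm_mult)
  have "norm (exp (- a * (of_real (r\<^sup>2) + z\<^sup>2))) \<le> exp (norm (- a * (of_real (r\<^sup>2) + z\<^sup>2)))"
    by (rule norm_exp)
  also have "\<dots> \<le> exp (A * n * (r\<^sup>2 + R\<^sup>2))"
  proof -
    have "norm (of_real (r\<^sup>2) + z\<^sup>2) \<le> r\<^sup>2 + R\<^sup>2"
      using norm_triangle_ineq[of "of_real (r\<^sup>2)" "z\<^sup>2"] \<open>norm (z\<^sup>2) \<le> R\<^sup>2\<close> by (simp add: norm_power)
    moreover have "A * n \<ge> 0"
      using a norm_ge_zero[of a] by linarith
    ultimately show ?thesis
      unfolding exp_le_cancel_iff norm_mult norm_minus_cancel using a by (intro mult_mono) auto
  qed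
  also have "\<dots> = exp (A * (r\<^sup>2 + R\<^sup>2)) ^ n"
    by (simp add: exp_of_nat_mult[symmetric] mult_ac)
  finally have f2: "norm (exp (- a * (of_real (r\<^sup>2) + z\<^sup>2))) \<le> exp (A * (r\<^sup>2 + R\<^sup>2)) ^ n" .
  have "norm (2 * b * z * of_real r) / 2 \<le> B * R * r"
    using b z \<open>r > 0\<close> \<open>B \<ge> 0\<close> by (simp add: norm_mult mult_mono)
  then have f3: "norm (besselI n (2 * b * z * of_real r)) \<le> (B * R * r) ^ n / fact n * exp ((B * R * r)\<^sup>2)"
    by (rule norm_besselI_le)
  have "Re (\<i> * of_real t * (of_real \<phi> - of_real \<phi>0 - of_real \<gamma> * z\<^sup>2 * of_real L))
      = t * \<gamma> * L * Im (z\<^sup>2)"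
    by (simp add: algebra_simps)
  also have "\<dots> \<le> \<bar>t\<bar> * (\<gamma> * L * \<bar>Im (z\<^sup>2)\<bar>)"
    using \<open>\<gamma> \<ge> 0\<close> \<open>L \<ge> 0\<close> abs_ge_self[of "t * \<gamma> * L * Im (z\<^sup>2)"] by (simp add: abs_mult mult_ac)
  also have "\<dots> \<le> n * (\<gamma> * L * R\<^sup>2)"
    unfolding \<open>\<bar>t\<bar> = n\<close> using abs_Im_le_cmod[of "z\<^sup>2"] \<open>norm (z\<^sup>2) \<le> R\<^sup>2\<close> \<open>\<gamma> \<ge> 0\<close> \<open>L \<ge> 0\<close>
    by (intro mult_left_mono) auto
  finally have f4: "norm (exp (\<i> * of_real t * (of_real \<phi> - of_real \<phi>0 - of_real \<gamma> * z\<^sup>2 * of_real L)))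
      \<le> exp (\<gamma> * L * R\<^sup>2) ^ n"
    by (simp add: exp_of_nat_mult[symmetric])
  have "norm (of_real r * b * exp (- a * (of_real (r\<^sup>2) + z\<^sup>2)) * besselI n (2 * b * z * of_real r)
           * exp (\<i> * of_real t * (of_real \<phi> - of_real \<phi>0 - of_real \<gamma> * z\<^sup>2 * of_real L)))
      = norm (of_real r * b) * norm (exp (- a * (of_real (r\<^sup>2) + z\<^sup>2)))
        * norm (besselI n (2 * b * z * of_real r))
        * norm (exp (\<i> * of_real t * (of_real \<phi> - of_real \<phi>0 - of_real \<gamma> * z\<^sup>2 * of_real L)))"
    by (simp only: norm_mult)
  also have "\<dots> \<le> r * B * exp (A * (r\<^sup>2 + R\<^sup>2)) ^ n * ((B * R * r) ^ n / fact n * exp ((B * R * r)\<^sup>2))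
        * exp (\<gamma> * L * R\<^sup>2) ^ n"
    using \<open>r > 0\<close> \<open>B \<ge> 0\<close> \<open>R \<ge> 0\<close>
    by (intro mult_mono[OF mult_mono[OF mult_mono[OF f1 f2] f3] f4]) auto
  also have "\<dots> = r * B * exp ((B * R * r)\<^sup>2)
        * (B * R * r * exp (A * (r\<^sup>2 + R\<^sup>2)) * exp (\<gamma> * L * R\<^sup>2)) ^ n / fact n"
    by (simp add: power_mult_distrib)
  finally show ?thesis .
qed

lemma Tpos_Tneg_dominated:
  assumes "\<gamma> > 0" and "\<sigma> > 0" and "L > 0" and "r > 0"
  shows "dominated_on_bounded_sets (\<lambda>n. Tpos \<gamma> \<sigma> L r \<phi> \<phi>0 (Suc n))"
    and "dominated_on_bounded_sets (\<lambda>n. Tneg \<gamma> \<sigma> L r \<phi> \<phi>0 (Suc n))"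
proof -
  define B where "B = 2 * sqrt 2 / (\<sigma>\<^sup>2 * L)"
  define A where "A = sqrt \<gamma> / \<sigma> + B"
  define C where "C R = r * B * exp ((B * R * r)\<^sup>2)" for R
  define Y where "Y R = B * R * r * exp (A * (r\<^sup>2 + R\<^sup>2)) * exp (\<gamma> * L * R\<^sup>2)" for R
  have Tpos_le: "norm (Tpos \<gamma> \<sigma> L r \<phi> \<phi>0 n z) \<le> C R * Y R ^ n / fact n"
    and Tneg_le: "norm (Tneg \<gamma> \<sigma> L r \<phi> \<phi>0 n z) \<le> C R * Y R ^ n / fact n"
    if "norm z \<le> R" and "n \<ge> 1" for R n z
  proof -
    note bounds = norm_am_le[OF assms(1-3) \<open>n \<ge> 1\<close>] norm_bm_le[OF assms(1-3) \<open>n \<ge> 1\<close>]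
    have "Tpos \<gamma> \<sigma> L r \<phi> \<phi>0 n z = of_real r * bm \<gamma> \<sigma> L n
        * exp (- am \<gamma> \<sigma> L n * (of_real (r\<^sup>2) + z\<^sup>2)) * besselI n (2 * bm \<gamma> \<sigma> L n * z * of_real r)
        * exp (\<i> * of_real (real n) * (of_real \<phi> - of_real \<phi>0 - of_real \<gamma> * z\<^sup>2 * of_real L))"
      by (simp add: Tpos_def Cpos_def)
    also have "norm \<dots> \<le> C R * Y R ^ n / fact n"
      unfolding C_def Y_def using bounds that assms
      by (intro norm_pzd_term_le) (simp_all add: A_def B_def)
    finally show "norm (Tpos \<gamma> \<sigma> L r \<phi> \<phi>0 n z) \<le> C R * Y R ^ n / fact n" .
    have "Tneg \<gamma> \<sigma> L r \<phi> \<phi>0 n z = of_real r * cnj (bm \<gamma> \<sigma> L n)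
        * exp (- cnj (am \<gamma> \<sigma> L n) * (of_real (r\<^sup>2) + z\<^sup>2))
        * besselI n (2 * cnj (bm \<gamma> \<sigma> L n) * z * of_real r)
        * exp (\<i> * of_real (- real n) * (of_real \<phi> - of_real \<phi>0 - of_real \<gamma> * z\<^sup>2 * of_real L))"
      by (simp add: Tneg_def Cneg_def)
    also have "norm \<dots> \<le> C R * Y R ^ n / fact n"
      unfolding C_def Y_def using bounds that assms
      by (intro norm_pzd_term_le) (simp_all add: A_def B_def)
    finally show "norm (Tneg \<gamma> \<sigma> L r \<phi> \<phi>0 n z) \<le> C R * Y R ^ n / fact n" .
  qed
  show "dominated_on_bounded_sets (\<lambda>n. Tpos \<gamma> \<sigma> L r \<phi> \<phi>0 (Suc n))"
    by (rule dominated_on_bounded_sets_exp[of _ C Y]) (rule Tpos_le; simp)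
  show "dominated_on_bounded_sets (\<lambda>n. Tneg \<gamma> \<sigma> L r \<phi> \<phi>0 (Suc n))"
    by (rule dominated_on_bounded_sets_exp[of _ C Y]) (rule Tneg_le; simp)
qed

lemma holomorphic_Tpos: "Tpos \<gamma> \<sigma> L r \<phi> \<phi>0 n holomorphic_on UNIV"
  unfolding Tpos_def[abs_def] Cpos_def by (intro holomorphic_intros)

lemma holomorphic_Tneg: "Tneg \<gamma> \<sigma> L r \<phi> \<phi>0 n holomorphic_on UNIV"
  unfolding Tneg_def[abs_def] Cneg_def by (intro holomorphic_intros)

lemma holomorphic_pRR0: "(\<lambda>z::complex. pRR0 \<sigma> L r z) holomorphic_on UNIV"
  unfolding pRR0_def by (intro holomorphic_intros) auto

lemma pRR0_of_real: "pRR0 \<sigma> L r (of_real x :: complex) = of_real (pRR0 \<sigma> L r x)"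
  by (simp add: pRR0_def exp_of_real[symmetric] besselI_of_real[symmetric])

lemma Tneg_of_real: "Tneg \<gamma> \<sigma> L r \<phi> \<phi>0 n (of_real x) = cnj (Tpos \<gamma> \<sigma> L r \<phi> \<phi>0 n (of_real x))"
  by (simp add: Tpos_def Tneg_def Cpos_def Cneg_def exp_cnj besselI_cnj)

lemma sfun_of_real:
  assumes "\<gamma> > 0" and "\<sigma> > 0" and "L > 0" and "r > 0"
  shows "sfun \<gamma> \<sigma> L r \<phi> \<phi>0 (of_real x) = of_real (pchan \<gamma> \<sigma> L r \<phi> x \<phi>0)"
proof -
  define S where "S = (\<Sum>m. Tpos \<gamma> \<sigma> L r \<phi> \<phi>0 (Suc m) (of_real x))"
  have "(\<lambda>m. Tpos \<gamma> \<sigma> L r \<phi> \<phi>0 (Suc m) (of_real x)) sums S"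
    unfolding S_def
    by (rule summable_sums[OF dominated_on_bounded_sets_summable[OF Tpos_Tneg_dominated(1)[OF assms]]])
  then have "(\<Sum>m. Tneg \<gamma> \<sigma> L r \<phi> \<phi>0 (Suc m) (of_real x)) = cnj S"
    by (simp add: Tneg_of_real sums_cnj sums_unique[symmetric])
  moreover have "Re S = (\<Sum>m. Re (Cpos \<gamma> \<sigma> L (Suc m) r (of_real x)
      * exp (\<i> * of_nat (Suc m) * of_real (\<phi> - \<phi>0 - \<gamma> * x\<^sup>2 * L))))"
    using Re_suminf[OF sums_summable[OF \<open>_ sums S\<close>]] by (simp add: S_def Tpos_def)
  ultimately show ?thesis
    unfolding sfun_def pchan_def pRR0_of_real S_def[symmetric]
    by (simp add: add.assoc complex_add_cnj field_simps)
qed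

theorem mainTheorem12:
  fixes \<gamma> \<sigma> L r \<phi> \<phi>0 :: real
  assumes "\<gamma> > 0" and "\<sigma> > 0" and "L > 0" and "r > 0"
    and "\<phi> \<in> {0..<2*pi}" and "\<phi>0 \<in> {0..<2*pi}"
  shows "(\<forall>B::complex set. bounded B \<longrightarrow>
            uniformly_convergent_on B (\<lambda>N z. \<Sum>m<N. Tpos \<gamma> \<sigma> L r \<phi> \<phi>0 (Suc m) z) \<and>
            uniformly_convergent_on B (\<lambda>N z. \<Sum>m<N. Tneg \<gamma> \<sigma> L r \<phi> \<phi>0 (Suc m) z))
       \<and> sfun \<gamma> \<sigma> L r \<phi> \<phi>0 holomorphic_on UNIV
       \<and> (\<forall>r0::real. r0 \<ge> 0 \<longrightarrow>
            sfun \<gamma> \<sigma> L r \<phi> \<phi>0 (of_real r0) = of_real (pchan \<gamma> \<sigma> L r \<phi> r0 \<phi>0))"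
proof (intro conjI allI impI)
  note Tpos_dom = Tpos_Tneg_dominated(1)[OF assms(1-4), of \<phi> \<phi>0]
  note Tneg_dom = Tpos_Tneg_dominated(2)[OF assms(1-4), of \<phi> \<phi>0]
  show "uniformly_convergent_on B (\<lambda>N z. \<Sum>m<N. Tpos \<gamma> \<sigma> L r \<phi> \<phi>0 (Suc m) z)"
    and "uniformly_convergent_on B (\<lambda>N z. \<Sum>m<N. Tneg \<gamma> \<sigma> L r \<phi> \<phi>0 (Suc m) z)"
    if "bounded B" for B :: "complex set"
    using uniform_limit_suminf_bounded[OF Tpos_dom that] uniform_limit_suminf_bounded[OF Tneg_dom that]
    by (auto simp: uniformly_convergent_on_def)
  show "sfun \<gamma> \<sigma> L r \<phi> \<phi>0 holomorphic_on UNIV"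
    unfolding sfun_def[abs_def]
    by (intro holomorphic_intros holomorphic_pRR0 holomorphic_suminf_entire
        holomorphic_Tpos holomorphic_Tneg Tpos_dom Tneg_dom)
  show "sfun \<gamma> \<sigma> L r \<phi> \<phi>0 (of_real r0) = of_real (pchan \<gamma> \<sigma> L r \<phi> r0 \<phi>0)" for r0
    by (rule sfun_of_real[OF assms(1-4)])
qed

end
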